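(* Let $\kappa$ be a regular uncountable cardinal, $I$ an ideal on $\kappa$, and $L=\{\lambda+1:\lambda<\kappa \text{ a limit ordinal}\}$. If $L\in I$, then the pleasant closure $P(I)$ contains $NS_\kappa$, and hence $P(I)$ is normal.
   Context: An ideal on $\kappa$ is a family of subsets of $\kappa$ closed under subsets and finite unions, which is $<\kappa$-complete and contains all singletons. $NS_\kappa$ is the ideal of nonstationary subsets of $\kappa$. For $A\subseteq\kappa$ and $X_\alpha\subseteq\kappa$, $\bigtriangledown_{\alpha\in A}X_\alpha=\{\xi<\kappa:\exists\alpha<\xi\,(\alpha\in A\wedge \xi\in X_\alpha)\}$. An ideal is normal if $X_\alpha$ in it for all $\alpha<\kappa$ implies $\bigtriangledown_{\alpha<\kappa}X_\alpha$ is in it; it is pleasant if whenever $A$ and all $X_\alpha$ are in it, so is $\bigtriangledown_{\alpha\in A}X_\alpha$. The pleasant closure $P(I)$ is the smallest pleasant ideal containing $I$ (obtained by iterating, transfinitely, the operation of adding diagonal unions $\bigtriangledown_{\alpha\in T}X_\alpha$ with $T\in I$ and the $X_\alpha$ from the previous stage, taking unions at limits). *)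

theory Defs
  imports Main "HOL-Library.Countable_Set"
begin

(* kappa is represented by a well-ordered type 'k: its elements are the ordinals < kappa. *)

definition card_less :: "'a set \<Rightarrow> 'b set \<Rightarrow> bool" where
  "card_less A B \<longleftrightarrow> \<not> (\<exists>f. inj_on f B \<and> f ` B \<subseteq> A)"

definition is_cardinal_type :: "'k::wellorder itself \<Rightarrow> bool" where
  "is_cardinal_type T \<longleftrightarrow> (\<forall>a::'k. card_less {x. x < a} (UNIV :: 'k set))"

definition regular_uncountable :: "'k::wellorder itself \<Rightarrow> bool" where
  "regular_uncountable T \<longleftrightarrow> is_cardinal_type T \<and> \<not> countable (UNIV :: 'k set) \<and>
     (\<forall>S::'k set. card_less S (UNIV :: 'k set) \<longrightarrow> (\<exists>b. \<forall>s\<in>S. s < b))"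

definition is_limit :: "'k::wellorder \<Rightarrow> bool" where
  "is_limit a \<longleftrightarrow> (\<exists>b. b < a) \<and> (\<forall>b<a. \<exists>c. b < c \<and> c < a)"

definition succ :: "'k::wellorder \<Rightarrow> 'k" where
  "succ a = (LEAST x. a < x)"

definition L_set :: "'k::wellorder set" where
  "L_set = {x. \<exists>l. is_limit l \<and> x = succ l}"

definition ideal_on :: "'k::wellorder set set \<Rightarrow> bool" where
  "ideal_on I \<longleftrightarrow>
     (\<forall>A B. A \<in> I \<and> B \<subseteq> A \<longrightarrow> B \<in> I) \<and>
     (\<forall>A B. A \<in> I \<and> B \<in> I \<longrightarrow> A \<union> B \<in> I) \<and>
     (\<forall>F. F \<subseteq> I \<and> card_less F (UNIV :: 'k set) \<longrightarrow> \<Union>F \<in> I) \<and>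
     (\<forall>x. {x} \<in> I)"

definition club :: "'k::wellorder set \<Rightarrow> bool" where
  "club C \<longleftrightarrow> (\<forall>a. \<exists>c\<in>C. a \<le> c) \<and>
     (\<forall>a. is_limit a \<and> (\<forall>b<a. \<exists>c\<in>C. b < c \<and> c < a) \<longrightarrow> a \<in> C)"

definition stationary :: "'k::wellorder set \<Rightarrow> bool" where
  "stationary S \<longleftrightarrow> (\<forall>C. club C \<longrightarrow> S \<inter> C \<noteq> {})"

definition NS :: "'k::wellorder set set" where
  "NS = {S. \<not> stationary S}"

definition diag_union :: "'k::wellorder set \<Rightarrow> ('k \<Rightarrow> 'k set) \<Rightarrow> 'k set" where
  "diag_union A X = {\<xi>. \<exists>\<alpha><\<xi>. \<alpha> \<in> A \<and> \<xi> \<in> X \<alpha>}"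

definition normal_ideal :: "'k::wellorder set set \<Rightarrow> bool" where
  "normal_ideal I \<longleftrightarrow> (\<forall>X. (\<forall>\<alpha>. X \<alpha> \<in> I) \<longrightarrow> diag_union UNIV X \<in> I)"

definition pleasant :: "'k::wellorder set set \<Rightarrow> bool" where
  "pleasant I \<longleftrightarrow> (\<forall>A X. A \<in> I \<and> (\<forall>\<alpha>. X \<alpha> \<in> I) \<longrightarrow> diag_union A X \<in> I)"

definition pleasant_closure :: "'k::wellorder set set \<Rightarrow> 'k set set" where
  "pleasant_closure I = \<Inter>{J. ideal_on J \<and> pleasant J \<and> I \<subseteq> J}"

end

theory Submission
  imports Defs
begin

(* Let C be a club and D the set of its limit points: D is closed, unbounded and contained
   in C.  If \<xi> \<notin> C lies above min D and c is the greatest point of D below \<xi>, then \<xi> lies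
   below the next point of D after c, so either \<xi> = c + 1 \<in> L, or c + 1 < \<xi> and \<xi> belongs to
   the bounded set X (c + 1) of ordinals below that next point.  Hence the complement of C
   is covered by a bounded set, L and \<nabla>\<beta>\<in>L. X \<beta>, all of which lie in every pleasant ideal
   containing L.  For normality, the set T of successor ordinals is nonstationary and
   \<nabla>\<alpha>. X \<alpha> \<subseteq> T \<union> \<nabla>\<beta>\<in>T. (\<Union>\<alpha><\<beta>. X \<alpha>). *)

lemma ideal_on_subset: "ideal_on J \<Longrightarrow> A \<in> J \<Longrightarrow> B \<subseteq> A \<Longrightarrow> B \<in> J"
  unfolding ideal_on_def by blast

lemma ideal_on_Un: "ideal_on J \<Longrightarrow> A \<in> J \<Longrightarrow> B \<in> J \<Longrightarrow> A \<union> B \<in> J"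
  unfolding ideal_on_def by blast

lemma ideal_on_empty: "ideal_on J \<Longrightarrow> {} \<in> J"
  unfolding ideal_on_def by blast

lemma ideal_on_Union:
  "ideal_on (J :: 'k::wellorder set set) \<Longrightarrow> F \<subseteq> J \<Longrightarrow> card_less F (UNIV :: 'k set) \<Longrightarrow> \<Union>F \<in> J"
  unfolding ideal_on_def by blast

lemma card_less_image:
  assumes "card_less B U"
  shows "card_less (g ` B) U"
  unfolding card_less_def
proof
  assume "\<exists>f. inj_on f U \<and> f ` U \<subseteq> g ` B"
  then obtain f where f: "inj_on f U" "f ` U \<subseteq> g ` B" by blast
  have "inj_on (inv_into B g \<circ> f) U"
    using f by (meson comp_inj_on inj_on_inv_into inj_on_subset)
  moreover have "(inv_into B g \<circ> f) ` U \<subseteq> B"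
    using f(2) by (auto simp: inv_into_into)
  ultimately show False
    using assms unfolding card_less_def by blast
qed

lemma ideal_on_UN_lessThan:
  fixes J :: "'k::wellorder set set"
    and \<beta> :: 'k
  assumes "is_cardinal_type TYPE('k)" "ideal_on J" "\<And>\<alpha>. \<alpha> < \<beta> \<Longrightarrow> X \<alpha> \<in> J"
  shows "(\<Union>\<alpha><\<beta>. X \<alpha>) \<in> J"
proof -
  have "card_less {..<\<beta>} (UNIV :: 'k set)"
    using assms(1) unfolding is_cardinal_type_def lessThan_def by blast
  then have "card_less (X ` {..<\<beta>}) (UNIV :: 'k set)"
    by (rule card_less_image)
  moreover have "X ` {..<\<beta>} \<subseteq> J"
    using assms(3) by auto
  ultimately show ?thesis
    using ideal_on_Union[OF assms(2)] by blast
qed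

lemma ideal_on_lessThan:
  fixes J :: "'k::wellorder set set"
  assumes "is_cardinal_type TYPE('k)" "ideal_on J"
  shows "{..<b} \<in> J"
proof -
  have "(\<Union>\<alpha><b. {\<alpha>}) \<in> J"
    by (rule ideal_on_UN_lessThan[OF assms]) (use assms(2) ideal_on_def in blast)
  then show ?thesis by simp
qed

lemma regular_uncountable_cardinal_type:
  "regular_uncountable TYPE('k::wellorder) \<Longrightarrow> is_cardinal_type TYPE('k)"
  unfolding regular_uncountable_def by blast

lemma regular_uncountable_countable_bounded:
  fixes S :: "'k::wellorder set"
  assumes "regular_uncountable TYPE('k)" "countable S"
  shows "\<exists>b. \<forall>s\<in>S. s < b"
proof -
  have "card_less S (UNIV :: 'k set)"
    unfolding card_less_def
  proof
    assume "\<exists>f. inj_on f (UNIV :: 'k set) \<and> f ` UNIV \<subseteq> S"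
    then obtain f where "inj_on f (UNIV :: 'k set)" "f ` UNIV \<subseteq> S" by blast
    then have "countable (UNIV :: 'k set)"
      using assms(2) countable_image_inj_on countable_subset by blast
    then show False
      using assms(1) unfolding regular_uncountable_def by blast
  qed
  then show ?thesis
    using assms(1) unfolding regular_uncountable_def by blast
qed

lemma less_succ:
  assumes "regular_uncountable TYPE('k::wellorder)"
  shows "(a::'k) < succ a"
proof -
  obtain b where "a < b"
    using regular_uncountable_countable_bounded[OF assms, of "{a}"] by auto
  then show ?thesis
    unfolding succ_def by (rule LeastI)
qed

lemma succ_le: "(a::'k::wellorder) < x \<Longrightarrow> succ a \<le> x"
  unfolding succ_def by (rule Least_le)

lemma strict_mono_succ:
  assumes "regular_uncountable TYPE('k::wellorder)"
  shows "strict_mono (succ :: 'k \<Rightarrow> 'k)"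
  by (rule strict_monoI) (meson assms less_succ le_less_trans succ_le)

lemma limit_neq_succ: "is_limit (x::'k::wellorder) \<Longrightarrow> \<alpha> < x \<Longrightarrow> x \<noteq> succ \<alpha>"
  unfolding is_limit_def by (meson leD succ_le)

lemma strict_mono_sup_is_limit:
  fixes f :: "nat \<Rightarrow> 'k::wellorder"
  assumes "regular_uncountable TYPE('k)" "strict_mono f"
  shows "\<exists>u. is_limit u \<and> (\<forall>n. f n < u) \<and> (\<forall>b<u. \<exists>n. b < f n)"
proof -
  obtain b where "\<forall>n. f n < b"
    using regular_uncountable_countable_bounded[OF assms(1), of "range f"] by blast
  define u where "u = (LEAST x. \<forall>n. f n < x)"
  have above: "\<forall>n. f n < u"
    unfolding u_def by (rule LeastI) fact
  have cofinal: "\<exists>n. c < f n" if "c < u" for c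
  proof -
    have "\<not> (\<forall>n. f n < c)"
      using not_less_Least[OF that[unfolded u_def]] .
    then obtain n where "c \<le> f n"
      by (meson not_less)
    then show ?thesis
      using assms(2) by (meson le_less_trans lessI strict_monoD)
  qed
  have "is_limit u"
    unfolding is_limit_def using above cofinal by blast
  with above cofinal show ?thesis by blast
qed

definition limit_points :: "'k::wellorder set \<Rightarrow> 'k set" where
  "limit_points C = {d. is_limit d \<and> (\<forall>b<d. \<exists>c\<in>C. b < c \<and> c < d)}"

lemma club_iff_limit_points:
  "club C \<longleftrightarrow> (\<forall>a. \<exists>c\<in>C. a \<le> c) \<and> limit_points C \<subseteq> C"
  unfolding club_def limit_points_def by blast

lemma limit_points_is_limit: "d \<in> limit_points C \<Longrightarrow> is_limit d"
  unfolding limit_points_def by blast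

lemma limit_points_limit_points: "limit_points (limit_points C) \<subseteq> limit_points C"
  unfolding limit_points_def by (blast intro: less_trans)

lemma limit_points_unbounded:
  fixes C :: "'k::wellorder set"
  assumes "regular_uncountable TYPE('k)" "\<forall>a. \<exists>c\<in>C. a \<le> c"
  shows "\<exists>d\<in>limit_points C. a < d"
proof -
  have "\<exists>c. c \<in> C \<and> x < c" for x
    using assms less_succ[OF assms(1), of x] by (meson less_le_trans)
  then obtain g where g: "\<And>x. g x \<in> C \<and> x < g x" by metis
  define f where "f n = (g ^^ Suc n) a" for n
  have "strict_mono f"
    unfolding strict_mono_Suc_iff by (simp add: f_def g)
  then obtain u where u: "is_limit u" "\<forall>n. f n < u" "\<forall>b<u. \<exists>n. b < f n"
    using strict_mono_sup_is_limit[OF assms(1)] by blast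
  have "range f \<subseteq> C"
    unfolding f_def using g by auto
  then have "u \<in> limit_points C"
    unfolding limit_points_def using u by blast
  moreover have "a < u"
    using g[of a] u(2)[rule_format, of 0] by (auto simp: f_def intro: less_trans)
  ultimately show ?thesis by blast
qed

lemma closed_greatest_below:
  fixes A :: "'k::wellorder set"
  assumes closed: "limit_points A \<subseteq> A" and "a \<in> A" "a < \<xi>" "\<xi> \<notin> A"
  shows "\<exists>c\<in>A. c < \<xi> \<and> (\<forall>d\<in>A. d < \<xi> \<longrightarrow> d \<le> c)"
proof (rule ccontr)
  assume no_greatest: "\<not> ?thesis"
  define \<delta> where "\<delta> = (LEAST x. \<forall>d\<in>A. d < \<xi> \<longrightarrow> d \<le> x)"
  have bound: "\<forall>d\<in>A. d < \<xi> \<longrightarrow> d \<le> \<delta>"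
    unfolding \<delta>_def by (rule LeastI[of _ \<xi>]) auto
  have "\<delta> \<le> \<xi>"
    unfolding \<delta>_def by (rule Least_le) auto
  have below: "d < \<delta>" if "d \<in> A" "d < \<xi>" for d
    using bound no_greatest that by (metis order.order_iff_strict)
  have cofinal: "\<exists>d\<in>A. d < \<xi> \<and> b < d" if "b < \<delta>" for b
    using not_less_Least[OF that[unfolded \<delta>_def]] by (meson not_less)
  have "\<delta> \<in> limit_points A"
    unfolding limit_points_def is_limit_def using assms(2,3) below cofinal by blast
  with closed have "\<delta> \<in> A" by blast
  with \<open>\<delta> \<le> \<xi>\<close> \<open>\<xi> \<notin> A\<close> have "\<delta> < \<xi>"
    using order.order_iff_strict by blast
  with \<open>\<delta> \<in> A\<close> bound no_greatest show False by blast
qed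

definition next_segment :: "'k::wellorder set \<Rightarrow> 'k \<Rightarrow> 'k set" where
  "next_segment D \<beta> = {\<xi>. \<exists>c\<in>D. succ c = \<beta> \<and> (\<forall>d\<in>D. c < d \<longrightarrow> \<xi> < d)}"

lemma next_segment_in_ideal:
  fixes J :: "'k::wellorder set set"
  assumes R: "regular_uncountable TYPE('k)" and J: "ideal_on J"
    and unbounded: "\<forall>a. \<exists>d\<in>D. a < d"
  shows "next_segment D \<beta> \<in> J"
proof (cases "\<exists>c\<in>D. succ c = \<beta>")
  case True
  then obtain c where c: "c \<in> D" "succ c = \<beta>" by blast
  obtain d where d: "d \<in> D" "c < d" using unbounded by blast
  have "next_segment D \<beta> \<subseteq> {..<d}"
    using c d strict_mono_imp_inj_on[OF strict_mono_succ[OF R]]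
    unfolding next_segment_def inj_on_def by auto
  then show ?thesis
    using ideal_on_lessThan[OF regular_uncountable_cardinal_type[OF R] J] ideal_on_subset[OF J]
    by blast
next
  case False
  then show ?thesis
    using ideal_on_empty[OF J] unfolding next_segment_def by simp
qed

lemma compl_subset_diag_union_next_segment:
  fixes D :: "'k::wellorder set"
  assumes closed: "limit_points D \<subseteq> D" and limits: "\<forall>d\<in>D. is_limit d" and "d\<^sub>0 \<in> D"
  shows "- D \<subseteq> {..<d\<^sub>0} \<union> L_set \<union> diag_union L_set (next_segment D)"
proof
  fix \<xi> assume "\<xi> \<in> - D"
  show "\<xi> \<in> {..<d\<^sub>0} \<union> L_set \<union> diag_union L_set (next_segment D)"
  proof (cases "\<exists>d\<in>D. d < \<xi>")
    case False
    then show ?thesis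
      using \<open>d\<^sub>0 \<in> D\<close> \<open>\<xi> \<in> - D\<close> by (auto simp: order.order_iff_strict)
  next
    case True
    then obtain c where c: "c \<in> D" "c < \<xi>" "\<forall>d\<in>D. d < \<xi> \<longrightarrow> d \<le> c"
      using closed_greatest_below[OF closed] \<open>\<xi> \<in> - D\<close> by blast
    have "succ c \<in> L_set"
      unfolding L_set_def using limits c(1) by blast
    moreover have "succ c \<le> \<xi>"
      using c(2) by (rule succ_le)
    moreover have "\<xi> \<in> next_segment D (succ c)"
      unfolding next_segment_def using c \<open>\<xi> \<in> - D\<close> by (force simp: not_less_iff_gr_or_eq)
    ultimately show ?thesis
      unfolding diag_union_def by (auto simp: order.order_iff_strict)
  qed
qed

lemma compl_club_in_pleasant_ideal:
  fixes J :: "'k::wellorder set set"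
  assumes R: "regular_uncountable TYPE('k)" and J: "ideal_on J" "pleasant J"
    and L: "L_set \<in> J" and "club C"
  shows "- C \<in> J"
proof -
  define D where "D = limit_points C"
  have "D \<subseteq> C" and unbounded: "\<forall>a. \<exists>d\<in>D. a < d"
    using \<open>club C\<close> limit_points_unbounded[OF R]
    unfolding D_def club_iff_limit_points by blast+
  then obtain d\<^sub>0 where "d\<^sub>0 \<in> D" by blast
  have "diag_union L_set (next_segment D) \<in> J"
    using J(2) L next_segment_in_ideal[OF R J(1) unbounded] unfolding pleasant_def by blast
  then have "{..<d\<^sub>0} \<union> L_set \<union> diag_union L_set (next_segment D) \<in> J"
    using ideal_on_lessThan[OF regular_uncountable_cardinal_type[OF R] J(1)] L
    by (simp add: ideal_on_Un[OF J(1)])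
  moreover have "- C \<subseteq> {..<d\<^sub>0} \<union> L_set \<union> diag_union L_set (next_segment D)"
    using compl_subset_diag_union_next_segment[of D d\<^sub>0] \<open>D \<subseteq> C\<close> \<open>d\<^sub>0 \<in> D\<close>
      limit_points_limit_points limit_points_is_limit unfolding D_def by blast
  ultimately show ?thesis
    using ideal_on_subset[OF J(1)] by blast
qed

lemma NS_subset_pleasant_ideal:
  fixes J :: "'k::wellorder set set"
  assumes "regular_uncountable TYPE('k)" "ideal_on J" "pleasant J" "L_set \<in> J"
  shows "NS \<subseteq> J"
proof
  fix S :: "'k set" assume "S \<in> NS"
  then obtain C where "club C" "S \<subseteq> - C"
    unfolding NS_def stationary_def by blast
  then show "S \<in> J"
    using compl_club_in_pleasant_ideal[OF assms] ideal_on_subset[OF assms(2)] by blast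
qed

lemma range_succ_nonstationary:
  assumes R: "regular_uncountable TYPE('k::wellorder)"
  shows "range (succ :: 'k \<Rightarrow> 'k) \<in> NS"
proof -
  have no_succ: "x \<notin> range succ" if "is_limit x" for x :: 'k
    using that limit_neq_succ less_succ[OF R] by fastforce
  have "\<exists>c\<in>- range succ. a \<le> c" for a :: 'k
  proof -
    obtain d where "d \<in> limit_points UNIV" "a < d"
      using limit_points_unbounded[OF R, of UNIV a] by blast
    then show ?thesis
      using no_succ limit_points_is_limit by (meson ComplI less_imp_le)
  qed
  moreover have "limit_points (- range succ) \<subseteq> - range (succ :: 'k \<Rightarrow> 'k)"
    using no_succ limit_points_is_limit by blast
  ultimately have "club (- range (succ :: 'k \<Rightarrow> 'k))"
    unfolding club_iff_limit_points by blast
  then show ?thesis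
    unfolding NS_def stationary_def by blast
qed

lemma normal_if_pleasant_NS_subset:
  fixes J :: "'k::wellorder set set"
  assumes R: "regular_uncountable TYPE('k)" and J: "ideal_on J" "pleasant J" and "NS \<subseteq> J"
  shows "normal_ideal J"
  unfolding normal_ideal_def
proof (intro allI impI)
  fix X :: "'k \<Rightarrow> 'k set" assume X: "\<forall>\<alpha>. X \<alpha> \<in> J"
  let ?T = "range (succ :: 'k \<Rightarrow> 'k)"
  have "?T \<in> J"
    using range_succ_nonstationary[OF R] \<open>NS \<subseteq> J\<close> by blast
  moreover have "(\<Union>\<alpha><\<beta>. X \<alpha>) \<in> J" for \<beta>
    using ideal_on_UN_lessThan[OF regular_uncountable_cardinal_type[OF R] J(1)] X by blast
  ultimately have "?T \<union> diag_union ?T (\<lambda>\<beta>. \<Union>\<alpha><\<beta>. X \<alpha>) \<in> J"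
    using J unfolding pleasant_def by (simp add: ideal_on_Un)
  moreover have "diag_union UNIV X \<subseteq> ?T \<union> diag_union ?T (\<lambda>\<beta>. \<Union>\<alpha><\<beta>. X \<alpha>)"
  proof
    fix \<xi> assume "\<xi> \<in> diag_union UNIV X"
    then obtain \<alpha> where "\<alpha> < \<xi>" "\<xi> \<in> X \<alpha>"
      unfolding diag_union_def by blast
    moreover have "\<alpha> < succ \<alpha>" using less_succ[OF R] .
    moreover have "succ \<alpha> \<le> \<xi>" using \<open>\<alpha> < \<xi>\<close> by (rule succ_le)
    ultimately show "\<xi> \<in> ?T \<union> diag_union ?T (\<lambda>\<beta>. \<Union>\<alpha><\<beta>. X \<alpha>)"
      unfolding diag_union_def by (auto simp: order.order_iff_strict)
  qed
  ultimately show "diag_union UNIV X \<in> J"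
    using ideal_on_subset[OF J(1)] by blast
qed

lemma normal_ideal_Inter: "(\<And>J. J \<in> F \<Longrightarrow> normal_ideal J) \<Longrightarrow> normal_ideal (\<Inter>F)"
  unfolding normal_ideal_def by blast

theorem theorem3p7:
  fixes I :: "'k::wellorder set set"
  assumes "regular_uncountable TYPE('k)"
    and "ideal_on I"
    and "L_set \<in> I"
  shows "NS \<subseteq> pleasant_closure I \<and> normal_ideal (pleasant_closure I)"
proof -
  let ?F = "{J. ideal_on J \<and> pleasant J \<and> I \<subseteq> J}"
  have NS: "NS \<subseteq> J" if "J \<in> ?F" for J
    using NS_subset_pleasant_ideal[OF assms(1)] assms(3) that by blast
  then have "NS \<subseteq> \<Inter>?F"
    by (rule Inter_greatest)
  moreover have "normal_ideal (\<Inter>?F)"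
  proof (rule normal_ideal_Inter)
    fix J assume "J \<in> ?F"
    then show "normal_ideal J"
      using normal_if_pleasant_NS_subset[OF assms(1)] NS[OF \<open>J \<in> ?F\<close>] by blast
  qed
  ultimately show ?thesis
    unfolding pleasant_closure_def ..
qed

end
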